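(* A compact metric space of negative type has a unique diversity-maximizing measure.
   Context: Let $(X,d)$ be a compact metric space, $Z(x,y)=e^{-d(x,y)}$, $\mathscr{P}(X)$ the set of Borel probability measures on $X$, and $\langle \mu,\nu\rangle_{\mathscr{W}} = \int_X\int_X Z(x,y)\,\mu(dx)\,\nu(dy)$. The maximum diversity is $|X|_+ = \sup_{\mu\in\mathscr{P}(X)} 1/\langle\mu,\mu\rangle_{\mathscr{W}}$ and a diversity-maximizing measure is a $\mu\in\mathscr{P}(X)$ attaining it. $X$ is of negative type if $(X,\sqrt d)$ embeds isometrically into a Hilbert space. *)

theory Defs
  imports "HOL-Analysis.Analysis" "HOL-Probability.Probability"
begin

definition borel_prob_measures :: "'a::metric_space set \<Rightarrow> 'a measure set" where
  "borel_prob_measures X = {M. sets M = sets (restrict_space borel X) \<and> prob_space M}"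

definition simkernel :: "'a::metric_space \<Rightarrow> 'a \<Rightarrow> real" where
  "simkernel x y = exp (- dist x y)"

definition sim_pairing :: "'a::metric_space measure \<Rightarrow> 'a measure \<Rightarrow> real" where
  "sim_pairing \<mu> \<nu> = (\<integral>y. (\<integral>x. simkernel x y \<partial>\<mu>) \<partial>\<nu>)"

definition max_diversity :: "'a::metric_space set \<Rightarrow> real" where
  "max_diversity X = (SUP \<mu> \<in> borel_prob_measures X. 1 / sim_pairing \<mu> \<mu>)"

definition diversity_maximizing :: "'a::metric_space set \<Rightarrow> 'a measure \<Rightarrow> bool" where
  "diversity_maximizing X \<mu> \<longleftrightarrow>
     \<mu> \<in> borel_prob_measures X \<and> 1 / sim_pairing \<mu> \<mu> = max_diversity X"

text \<open>X is of negative type iff (X, sqrt d) embeds isometrically into the Hilbert space 'h.\<close>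
definition neg_type_into :: "'a::metric_space set \<Rightarrow> ('a \<Rightarrow> 'h::{real_inner,complete_space}) \<Rightarrow> bool" where
  "neg_type_into X f \<longleftrightarrow> (\<forall>x\<in>X. \<forall>y\<in>X. dist (f x) (f y) = sqrt (dist x y))"

end

theory Submission
  imports Defs
begin

text \<open>Write \<open>energy \<mu> = \<langle>\<mu>, \<mu>\<rangle>\<close>. Existence of a minimizer: discretize \<open>X\<close> by nested finite
  partitions into cells whose diameters tend to \<open>0\<close>. The cell masses of a minimizing sequence have
  a pointwise convergent subsequence (Tychonoff), and every consistent family of cell masses is
  realized by a probability measure, the image of Lebesgue measure on \<open>[0, 1)\<close> under a quantile
  map; its energy is the limit of the discretized energies, which is therefore the infimum.

  Uniqueness: for two minimizers \<open>\<mu>\<close> and \<open>\<nu>\<close>, comparison with their midpoint shows that the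
  discretized energy of \<open>\<mu> - \<nu>\<close> tends to \<open>0\<close>. If \<open>f\<close> embeds \<open>(X, \<surd>d)\<close> isometrically into a
  Hilbert space, the kernel is the Gaussian \<open>exp (- \<parallel>f x - f y\<parallel>\<^sup>2)\<close>, which stays positive
  semidefinite after adjoining an arbitrary point \<open>h\<close>; this forces \<open>\<mu>\<close> and \<open>\<nu>\<close> to integrate
  \<open>exp (- \<parallel>f x - h\<parallel>\<^sup>2)\<close> equally for every \<open>h\<close>. The functions \<open>x \<mapsto> exp (f x \<bullet> h)\<close> span a
  point-separating algebra, so by Stone--Weierstrass \<open>\<mu>\<close> and \<open>\<nu>\<close> agree on all continuous
  functions and therefore coincide.\<close>

section \<open>Integrals over finite partitions\<close>

definition measurable_partition :: "'b measure \<Rightarrow> 'i set \<Rightarrow> ('i \<Rightarrow> 'b set) \<Rightarrow> bool" where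
  "measurable_partition M W A \<longleftrightarrow>
     finite W \<and> (\<forall>v\<in>W. A v \<in> sets M) \<and> disjoint_family_on A W \<and> space M \<subseteq> (\<Union>v\<in>W. A v)"

lemma (in prob_space) integral_partition_approx:
  assumes A: "measurable_partition M W A" and f: "integrable M f"
    and close: "\<And>v x. v \<in> W \<Longrightarrow> x \<in> A v \<Longrightarrow> \<bar>f x - c v\<bar> \<le> e"
  shows "\<bar>(\<integral>x. f x \<partial>M) - (\<Sum>v\<in>W. prob (A v) * c v)\<bar> \<le> e"
proof -
  have fin: "finite W" and sets: "\<And>v. v \<in> W \<Longrightarrow> A v \<in> events"
    and disj: "disjoint_family_on A W" and cover: "\<And>x. x \<in> space M \<Longrightarrow> \<exists>v\<in>W. x \<in> A v"
    using A unfolding measurable_partition_def by auto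
  define g where "g x = (\<Sum>v\<in>W. indicator (A v) x * c v)" for x
  have g: "integrable M g"
    unfolding g_def using sets by (auto simp: emeasure_eq_measure)
  have "(\<integral>x. g x \<partial>M) = (\<Sum>v\<in>W. prob (A v) * c v)"
    unfolding g_def using sets
    by (subst Bochner_Integration.integral_sum)
      (auto intro!: sum.cong simp: emeasure_eq_measure Int_absorb2 sets.sets_into_space)
  moreover have "g x = c v" if "v \<in> W" "x \<in> A v" for v x
  proof -
    have "g x = indicator (A v) x * c v + (\<Sum>u\<in>W-{v}. indicator (A u) x * c u)"
      unfolding g_def by (rule sum.remove[OF fin that(1)])
    also have "(\<Sum>u\<in>W-{v}. indicator (A u) x * c u) = 0"
      using disj that unfolding disjoint_family_on_def by (intro sum.neutral) (auto split: split_indicator)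
    finally show ?thesis using that by simp
  qed
  then have "\<bar>f x - g x\<bar> \<le> e" if "x \<in> space M" for x
    using cover[OF that] close by force
  then have "(\<integral>x. f x - g x \<partial>M) \<le> (\<integral>x. e \<partial>M)" and "(\<integral>x. g x - f x \<partial>M) \<le> (\<integral>x. e \<partial>M)"
    using f g by (intro integral_mono; force simp: abs_le_iff)+
  ultimately show ?thesis using f g by (simp add: prob_space abs_le_iff)
qed

lemma iterated_integral_partition_approx:
  assumes M: "prob_space M" and N: "prob_space N"
    and A: "measurable_partition M W A" and B: "measurable_partition N W B"
    and int_inner: "\<And>t. t \<in> space N \<Longrightarrow> integrable M (\<lambda>s. F s t)"
    and int_outer: "integrable N (\<lambda>t. \<integral>s. F s t \<partial>M)"
    and close: "\<And>v w s t. v \<in> W \<Longrightarrow> w \<in> W \<Longrightarrow> s \<in> A v \<Longrightarrow> t \<in> B w \<Longrightarrow> \<bar>F s t - c v w\<bar> \<le> e"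
  shows "\<bar>(\<integral>t. (\<integral>s. F s t \<partial>M) \<partial>N) - (\<Sum>w\<in>W. measure N (B w) * (\<Sum>v\<in>W. measure M (A v) * c v w))\<bar> \<le> e"
proof (rule prob_space.integral_partition_approx[OF N B int_outer])
  fix w t assume w: "w \<in> W" and t: "t \<in> B w"
  then have "t \<in> space N"
    using B sets.sets_into_space unfolding measurable_partition_def by blast
  then show "\<bar>(\<integral>s. F s t \<partial>M) - (\<Sum>v\<in>W. measure M (A v) * c v w)\<bar> \<le> e"
    using w t by (intro prob_space.integral_partition_approx[OF M A int_inner]) (auto intro: close)
qed

section \<open>Positive definiteness of the Gaussian kernel\<close>

lemma orthogonal_expansion:
  fixes E :: "'h::real_inner set"
  assumes fin: "finite E" and orth: "pairwise orthogonal E" and "0 \<notin> E" and x: "x \<in> span E"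
  shows "x = (\<Sum>e\<in>E. ((e \<bullet> x) / (e \<bullet> e)) *\<^sub>R e)"
proof -
  define y where "y = x - (\<Sum>e\<in>E. ((e \<bullet> x) / (e \<bullet> e)) *\<^sub>R e)"
  have "(\<Sum>e\<in>E. ((e \<bullet> x) / (e \<bullet> e)) *\<^sub>R e) \<in> span E"
    by (simp add: span_base span_scale span_sum)
  then have y: "y \<in> span E"
    unfolding y_def by (rule span_diff[OF x])
  have "orthogonal y e" if e: "e \<in> E" for e
  proof -
    have "(\<Sum>e'\<in>E. ((e' \<bullet> x) / (e' \<bullet> e')) * (e \<bullet> e')) = ((e \<bullet> x) / (e \<bullet> e)) * (e \<bullet> e)
       + (\<Sum>e'\<in>E-{e}. ((e' \<bullet> x) / (e' \<bullet> e')) * (e \<bullet> e'))"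
      using fin e by (rule sum.remove)
    also have "(\<Sum>e'\<in>E-{e}. ((e' \<bullet> x) / (e' \<bullet> e')) * (e \<bullet> e')) = 0"
      using orth e by (intro sum.neutral) (auto simp: pairwise_def orthogonal_def)
    also have "((e \<bullet> x) / (e \<bullet> e)) * (e \<bullet> e) = e \<bullet> x"
      using \<open>0 \<notin> E\<close> e by auto
    finally show ?thesis
      unfolding y_def orthogonal_def by (simp add: inner_diff_right inner_sum_right inner_commute)
  qed
  then have "orthogonal y y"
    using orthogonal_to_span[OF y] by (simp add: orthogonal_commute)
  then have "y = 0" by (simp add: orthogonal_def)
  then show ?thesis unfolding y_def by simp
qed

text \<open>Schur's product theorem for Gram kernels: in an orthogonal basis of the span, the kernel
  \<open>(a i \<bullet> a j) ^ Suc n\<close> is a nonnegative combination of \<open>n\<close>-th power kernels with reweighted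
  coefficients.\<close>

lemma inner_power_kernel_psd:
  fixes a :: "'i \<Rightarrow> 'h::real_inner"
  assumes fin: "finite I"
  shows "0 \<le> (\<Sum>i\<in>I. \<Sum>j\<in>I. d i * d j * (a i \<bullet> a j) ^ n)"
proof (induction n arbitrary: d)
  case 0
  have "(\<Sum>i\<in>I. \<Sum>j\<in>I. d i * d j * (a i \<bullet> a j) ^ 0) = (\<Sum>i\<in>I. d i) * (\<Sum>i\<in>I. d i)"
    by (simp add: sum_product)
  then show ?case by simp
next
  case (Suc n)
  obtain C where C: "finite C" "span C = span (a ` I)" "pairwise orthogonal C"
    using basis_orthogonal[of "a ` I"] fin by auto
  define E where "E = C - {0}"
  have E: "finite E" "pairwise orthogonal E" "0 \<notin> E" "span E = span (a ` I)"
    using C unfolding E_def by (auto simp: pairwise_def)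
  have expand: "a i \<bullet> a j = (\<Sum>e\<in>E. (e \<bullet> a i) * (e \<bullet> a j) / (e \<bullet> e))" if "i \<in> I" for i j
  proof -
    have "a i = (\<Sum>e\<in>E. ((e \<bullet> a i) / (e \<bullet> e)) *\<^sub>R e)"
      by (intro orthogonal_expansion E(1-3)) (simp add: E(4) span_base that)
    then have "a i \<bullet> a j = (\<Sum>e\<in>E. ((e \<bullet> a i) / (e \<bullet> e)) *\<^sub>R e) \<bullet> a j" by simp
    then show ?thesis by (simp add: inner_sum_left)
  qed
  have "(\<Sum>i\<in>I. \<Sum>j\<in>I. d i * d j * (a i \<bullet> a j) ^ Suc n)
      = (\<Sum>i\<in>I. \<Sum>j\<in>I. \<Sum>e\<in>E. (1 / (e \<bullet> e)) * ((d i * (e \<bullet> a i)) * (d j * (e \<bullet> a j)) * (a i \<bullet> a j) ^ n))"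
    by (intro sum.cong refl) (simp add: expand sum_distrib_left sum_distrib_right algebra_simps)
  also have "\<dots> = (\<Sum>e\<in>E. (1 / (e \<bullet> e)) *
      (\<Sum>i\<in>I. \<Sum>j\<in>I. (d i * (e \<bullet> a i)) * (d j * (e \<bullet> a j)) * (a i \<bullet> a j) ^ n))"
    by (simp add: sum_distrib_left sum.swap[of _ E] sum.swap[of _ E I])
  also have "\<dots> \<ge> 0"
    by (intro sum_nonneg mult_nonneg_nonneg Suc) simp
  finally show ?case .
qed

lemma gaussian_kernel_psd:
  fixes a :: "'i \<Rightarrow> 'h::real_inner"
  assumes fin: "finite I"
  shows "0 \<le> (\<Sum>i\<in>I. \<Sum>j\<in>I. c i * c j * exp (- (norm (a i - a j) ^ 2)))"
proof -
  define d where "d i = c i * exp (- (a i \<bullet> a i))" for i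
  have kernel: "c i * c j * exp (- (norm (a i - a j) ^ 2)) = d i * d j * exp (2 * (a i \<bullet> a j))" for i j
  proof -
    have "norm (a i - a j) ^ 2 = a i \<bullet> a i + a j \<bullet> a j - 2 * (a i \<bullet> a j)"
      by (simp add: power2_norm_eq_inner inner_diff_left inner_diff_right inner_commute)
    then show ?thesis
      unfolding d_def by (simp add: exp_diff exp_add[symmetric] exp_minus field_simps)
  qed
  have "(\<lambda>n. \<Sum>i\<in>I. \<Sum>j\<in>I. d i * d j * ((2 * (a i \<bullet> a j)) ^ n / fact n)) sums
      (\<Sum>i\<in>I. \<Sum>j\<in>I. d i * d j * exp (2 * (a i \<bullet> a j)))"
    using exp_converges[of "2 * (a _ \<bullet> a _)"]
    by (intro sums_sum sums_mult) (simp add: divide_inverse mult.commute)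
  moreover have "0 \<le> (\<Sum>i\<in>I. \<Sum>j\<in>I. d i * d j * ((2 * (a i \<bullet> a j)) ^ n / fact n))" for n
  proof -
    have "(\<Sum>i\<in>I. \<Sum>j\<in>I. d i * d j * ((2 * (a i \<bullet> a j)) ^ n / fact n))
       = (2 ^ n / fact n) * (\<Sum>i\<in>I. \<Sum>j\<in>I. d i * d j * (a i \<bullet> a j) ^ n)"
      by (simp add: sum_distrib_left algebra_simps)
    then show ?thesis using inner_power_kernel_psd[OF fin, of d a n] by simp
  qed
  ultimately have "0 \<le> (\<Sum>i\<in>I. \<Sum>j\<in>I. d i * d j * exp (2 * (a i \<bullet> a j)))"
    by (rule sums_le[OF _ sums_zero, rotated])
  then show ?thesis by (simp add: kernel)
qed

lemma gaussian_kernel_psd_extra_point: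
  fixes a :: "'i \<Rightarrow> 'h::real_inner"
  assumes fin: "finite W"
  shows "0 \<le> (\<Sum>v\<in>W. \<Sum>w\<in>W. c v * c w * exp (- (norm (a v - a w) ^ 2)))
     + 2 * s * (\<Sum>v\<in>W. c v * exp (- (norm (a v - h) ^ 2))) + s ^ 2"
proof -
  define a' where "a' i = (case i of None \<Rightarrow> h | Some v \<Rightarrow> a v)" for i
  define c' where "c' i = (case i of None \<Rightarrow> s | Some v \<Rightarrow> c v)" for i
  define I where "I = insert None (Some ` W)"
  have sum_I: "(\<Sum>i\<in>I. F i) = F None + (\<Sum>v\<in>W. F (Some v))" for F :: "'i option \<Rightarrow> real"
    unfolding I_def using fin by (simp add: sum.reindex)
  have "0 \<le> (\<Sum>i\<in>I. \<Sum>j\<in>I. c' i * c' j * exp (- (norm (a' i - a' j) ^ 2)))"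
    by (rule gaussian_kernel_psd) (simp add: I_def fin)
  also have "\<dots> = s * s + s * (\<Sum>w\<in>W. c w * exp (- (norm (h - a w) ^ 2)))
      + (\<Sum>v\<in>W. c v * s * exp (- (norm (a v - h) ^ 2))
      + (\<Sum>w\<in>W. c v * c w * exp (- (norm (a v - a w) ^ 2))))"
    unfolding sum_I by (simp add: a'_def c'_def sum_distrib_left mult.assoc)
  also have "\<dots> = (\<Sum>v\<in>W. \<Sum>w\<in>W. c v * c w * exp (- (norm (a v - a w) ^ 2)))
     + 2 * s * (\<Sum>v\<in>W. c v * exp (- (norm (a v - h) ^ 2))) + s ^ 2"
    by (simp add: sum.distrib norm_minus_commute sum_distrib_left power2_eq_square algebra_simps)
  finally show ?thesis .
qed

section \<open>The similarity kernel on a compact space\<close>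

lemma abs_exp_minus_diff_le:
  fixes a b :: real
  assumes "0 \<le> a" "0 \<le> b"
  shows "\<bar>exp (- a) - exp (- b)\<bar> \<le> \<bar>a - b\<bar>"
proof -
  have *: "exp (- a) - exp (- b) \<le> b - a" if "0 \<le> a" "a \<le> b" for a b :: real
  proof -
    have "exp (- a) - exp (- b) = exp (- a) * (1 - exp (- (b - a)))"
      by (simp add: right_diff_distrib exp_add[symmetric])
    also have "\<dots> \<le> 1 - exp (- (b - a))"
      using that by (intro mult_left_le_one_le) auto
    also have "\<dots> \<le> b - a"
      using exp_ge_add_one_self[of "a - b"] by (simp only: minus_diff_eq)
    finally show ?thesis .
  qed
  show ?thesis
    using *[of a b] *[of b a] assms by (cases "a \<le> b") auto
qed

lemma simkernel_pos: "0 < simkernel x y"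
  unfolding simkernel_def by simp

lemma simkernel_le_1: "simkernel x y \<le> 1"
  unfolding simkernel_def by simp

lemma continuous_on_simkernel: "continuous_on S (\<lambda>x. simkernel x y)"
  unfolding simkernel_def by (intro continuous_intros)

lemma measurable_simkernel: "(\<lambda>x. simkernel x y) \<in> borel_measurable (restrict_space borel S)"
  by (rule borel_measurable_continuous_on_restrict[OF continuous_on_simkernel])

lemma simkernel_diff_le: "\<bar>simkernel x y - simkernel x' y'\<bar> \<le> dist x x' + dist y y'"
proof -
  have "\<bar>simkernel x y - simkernel x' y'\<bar> \<le> \<bar>dist x y - dist x' y'\<bar>"
    unfolding simkernel_def by (rule abs_exp_minus_diff_le) auto
  also have "\<dots> \<le> dist x x' + dist y y'"
    using dist_triangle[of x y x'] dist_triangle[of x' y y'] dist_triangle[of x' y' x]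
      dist_triangle[of x y' y] by (simp add: dist_commute abs_le_iff)
  finally show ?thesis .
qed

definition potential :: "'a::metric_space measure \<Rightarrow> 'a \<Rightarrow> real" where
  "potential M y = (\<integral>x. simkernel x y \<partial>M)"

lemma sim_pairing_potential: "sim_pairing M N = (\<integral>y. potential M y \<partial>N)"
  unfolding sim_pairing_def potential_def ..

lemma potential_nonneg: "0 \<le> potential M y"
  unfolding potential_def by (simp add: less_imp_le simkernel_pos)

abbreviation energy :: "'a::metric_space measure \<Rightarrow> real" where
  "energy M \<equiv> sim_pairing M M"

locale compact_domain =
  fixes X :: "'a::metric_space set"
  assumes compact: "compact X" and nonempty: "X \<noteq> {}"
begin

abbreviation PX :: "'a measure set" where
  "PX \<equiv> borel_prob_measures X"

lemma
  assumes "M \<in> PX"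
  shows PX_prob_space: "prob_space M"
    and sets_PX: "sets M = sets (restrict_space borel X)"
    and space_PX: "space M = X"
proof -
  show "prob_space M" and sets: "sets M = sets (restrict_space borel X)"
    using assms unfolding borel_prob_measures_def by auto
  show "space M = X"
    using sets_eq_imp_space_eq[OF sets] by (simp add: space_restrict_space)
qed

lemma PX_nonempty: "PX \<noteq> {}"
proof -
  obtain x where "x \<in> X" using nonempty by auto
  then have "return (restrict_space borel X) x \<in> PX"
    unfolding borel_prob_measures_def by (auto intro!: prob_space_return simp: space_restrict_space)
  then show ?thesis by blast
qed

lemma borel_measurable_continuous_on_PX:
  assumes "M \<in> PX" and "continuous_on X g"
  shows "g \<in> borel_measurable M"
  unfolding measurable_cong_sets[OF sets_PX[OF assms(1)] refl]
  by (rule borel_measurable_continuous_on_restrict[OF assms(2)])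

lemma integrable_continuous_on_PX:
  fixes g :: "'a \<Rightarrow> real"
  assumes M: "M \<in> PX" and g: "continuous_on X g"
  shows "integrable M g"
proof -
  interpret prob_space M using PX_prob_space[OF M] .
  obtain B where "\<And>x. x \<in> X \<Longrightarrow> norm (g x) \<le> B"
    using compact_imp_bounded[OF compact_continuous_image[OF g compact]] unfolding bounded_iff by auto
  then show ?thesis
    using borel_measurable_continuous_on_PX[OF M g] space_PX[OF M] by (intro integrable_const_bound) auto
qed

lemma integrable_simkernel_PX: "M \<in> PX \<Longrightarrow> integrable M (\<lambda>x. simkernel x y)"
  by (rule integrable_continuous_on_PX[OF _ continuous_on_simkernel])

lemma potential_diff_le:
  assumes M: "M \<in> PX"
  shows "\<bar>potential M y - potential M y'\<bar> \<le> dist y y'"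
proof -
  interpret prob_space M using PX_prob_space[OF M] .
  have "\<bar>simkernel x y - simkernel x y'\<bar> \<le> dist y y'" for x
    using simkernel_diff_le[of x y x y'] by simp
  then have "(\<integral>x. simkernel x y - simkernel x y' \<partial>M) \<le> dist y y'"
    and "(\<integral>x. simkernel x y' - simkernel x y \<partial>M) \<le> dist y y'"
    using integrable_simkernel_PX[OF M] by (intro integral_le_const; force simp: abs_le_iff)+
  then show ?thesis
    unfolding potential_def using integrable_simkernel_PX[OF M] by (simp add: abs_le_iff)
qed

lemma continuous_on_potential:
  assumes "M \<in> PX"
  shows "continuous_on S (potential M)"
proof (rule lipschitz_on_continuous_on)
  show "1-lipschitz_on S (potential M)"
    by (rule lipschitz_onI) (auto simp: dist_real_def potential_diff_le[OF assms])
qed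

lemma potential_le_1: "M \<in> PX \<Longrightarrow> potential M y \<le> 1"
  unfolding potential_def
  by (rule prob_space.integral_le_const[OF PX_prob_space integrable_simkernel_PX])
    (auto simp: simkernel_le_1)

lemma exp_diameter_le_potential:
  assumes M: "M \<in> PX" and y: "y \<in> X"
  shows "exp (- diameter X) \<le> potential M y"
  unfolding potential_def
proof (rule prob_space.integral_ge_const[OF PX_prob_space[OF M] integrable_simkernel_PX[OF M]])
  show "AE x in M. exp (- diameter X) \<le> simkernel x y"
    using diameter_bounded_bound[OF compact_imp_bounded[OF compact] _ y] space_PX[OF M]
    unfolding simkernel_def by (intro AE_I2) auto
qed

lemma exp_diameter_le_sim_pairing:
  assumes M: "M \<in> PX" and N: "N \<in> PX"
  shows "exp (- diameter X) \<le> sim_pairing M N"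
  unfolding sim_pairing_potential
  using exp_diameter_le_potential[OF M] space_PX[OF N]
  by (intro prob_space.integral_ge_const[OF PX_prob_space[OF N]]
      integrable_continuous_on_PX[OF N continuous_on_potential[OF M]] AE_I2) auto

end

section \<open>Nested partitions\<close>

definition radius :: "nat \<Rightarrow> real" where
  "radius k = (1 / 2) ^ k"

lemma radius_pos: "0 < radius k"
  unfolding radius_def by simp

lemma radius_tendsto_0: "radius \<longlonglongrightarrow> 0"
  unfolding radius_def by (rule LIMSEQ_realpow_zero) auto

lemma le_0_if_le_mult_radius:
  fixes a :: real
  assumes "\<And>k. a \<le> c * radius k"
  shows "a \<le> 0"
  using LIMSEQ_le_const[OF tendsto_mult_right_zero[OF radius_tendsto_0, of c]] assms by simp

text \<open>Addresses list the newest level first: the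
  cell of \<open>[j\<^sub>k\<^sub>-\<^sub>1, \<dots>, j\<^sub>0]\<close> is \<open>X \<inter> piece 0 j\<^sub>0 \<inter> \<dots> \<inter> piece (k - 1) j\<^sub>k\<^sub>-\<^sub>1\<close>, so the cells with
  addresses of length \<open>k\<close> partition \<open>X\<close> and refine those of length \<open>k - 1\<close>.\<close>

context compact_domain
begin

definition centres :: "nat \<Rightarrow> 'a list" where
  "centres k = (SOME l. set l \<subseteq> X \<and> X \<subseteq> (\<Union>x\<in>set l. ball x (radius k)))"

lemma centres_spec: "set (centres k) \<subseteq> X" "X \<subseteq> (\<Union>x\<in>set (centres k). ball x (radius k))"
proof -
  obtain C where "C \<subseteq> X" "finite C" "X \<subseteq> (\<Union>x\<in>C. ball x (radius k))"
    using compactE_image[OF compact, of X "\<lambda>x. ball x (radius k)"] radius_pos[of k] by force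
  moreover obtain l where "set l = C" using finite_list[OF \<open>finite C\<close>] by blast
  ultimately have "\<exists>l. set l \<subseteq> X \<and> X \<subseteq> (\<Union>x\<in>set l. ball x (radius k))" by blast
  then show "set (centres k) \<subseteq> X" "X \<subseteq> (\<Union>x\<in>set (centres k). ball x (radius k))"
    unfolding centres_def by (metis (mono_tags, lifting) someI_ex)+
qed

abbreviation ncentres :: "nat \<Rightarrow> nat" where
  "ncentres k \<equiv> length (centres k)"

abbreviation centre :: "nat \<Rightarrow> nat \<Rightarrow> 'a" where
  "centre k j \<equiv> centres k ! j"

lemma centres_cover: "x \<in> X \<Longrightarrow> \<exists>j<ncentres k. x \<in> ball (centre k j) (radius k)"
  using centres_spec(2)[of k] by (force simp: set_conv_nth)

lemma ncentres_pos: "0 < ncentres k"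
proof -
  obtain x where "x \<in> X" using nonempty by auto
  then obtain j where "j < ncentres k" using centres_cover by blast
  then show ?thesis by linarith
qed

definition piece :: "nat \<Rightarrow> nat \<Rightarrow> 'a set" where
  "piece k j = (if j < ncentres k
     then X \<inter> ball (centre k j) (radius k) - (\<Union>i<j. ball (centre k i) (radius k)) else {})"

lemma piece_cover: "x \<in> X \<Longrightarrow> \<exists>j<ncentres k. x \<in> piece k j"
proof -
  assume x: "x \<in> X"
  define j where "j = (LEAST j. j < ncentres k \<and> x \<in> ball (centre k j) (radius k))"
  have "j < ncentres k \<and> x \<in> ball (centre k j) (radius k)"
    unfolding j_def using centres_cover[OF x, of k] by (metis (mono_tags, lifting) LeastI)
  moreover have "x \<notin> ball (centre k i) (radius k)" if "i < j" for i
    using not_less_Least[OF that[unfolded j_def]] that calculation by auto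
  ultimately show ?thesis using x unfolding piece_def by (intro exI[of _ j]) auto
qed

lemma piece_unique: "x \<in> piece k i \<Longrightarrow> x \<in> piece k j \<Longrightarrow> i = j"
  unfolding piece_def by (auto split: if_splits) (metis linorder_neqE_nat lessThan_iff)

lemma piece_subset_ball: "piece k j \<subseteq> ball (centre k j) (radius k)"
  unfolding piece_def by auto

lemma sets_piece: "piece k j \<in> sets (restrict_space borel X)"
proof -
  have "piece k j = X \<inter> (if j < ncentres k
      then ball (centre k j) (radius k) - (\<Union>i<j. ball (centre k i) (radius k)) else {})"
    unfolding piece_def by auto
  then show ?thesis unfolding sets_restrict_space by auto
qed

fun cell :: "nat list \<Rightarrow> 'a set" where
  "cell [] = X"
| "cell (j # w) = cell w \<inter> piece (length w) j"

fun addresses :: "nat \<Rightarrow> nat list set" where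
  "addresses 0 = {[]}"
| "addresses (Suc k) = (\<lambda>(j, w). j # w) ` ({..<ncentres k} \<times> addresses k)"

lemma finite_addresses: "finite (addresses k)"
  by (induction k) auto

lemma length_addresses: "w \<in> addresses k \<Longrightarrow> length w = k"
  by (induction k arbitrary: w) auto

lemma Cons_addresses_iff: "j # w \<in> addresses (Suc k) \<longleftrightarrow> j < ncentres k \<and> w \<in> addresses k"
  by auto

lemma addresses_SucE:
  assumes "v \<in> addresses (Suc k)"
  obtains j w where "v = j # w" "j < ncentres k" "w \<in> addresses k"
  using assms by auto

lemma sum_addresses_Suc:
  "(\<Sum>v\<in>addresses (Suc k). g v) = (\<Sum>w\<in>addresses k. \<Sum>j<ncentres k. g (j # w))"
proof -
  have "inj_on (\<lambda>(j, w). j # w) ({..<ncentres k} \<times> addresses k)"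
    by (auto simp: inj_on_def)
  then have "(\<Sum>v\<in>addresses (Suc k). g v) = (\<Sum>(j, w)\<in>{..<ncentres k} \<times> addresses k. g (j # w))"
    by (simp add: sum.reindex split_def)
  also have "\<dots> = (\<Sum>w\<in>addresses k. \<Sum>j<ncentres k. g (j # w))"
    by (simp add: sum.cartesian_product[symmetric] sum.swap[of _ "{..<ncentres k}"])
  finally show ?thesis .
qed

lemma cell_subset: "cell w \<subseteq> X"
  by (induction w) auto

lemma sets_cell: "cell w \<in> sets (restrict_space borel X)"
proof (induction w)
  case Nil
  show ?case using sets.top[of "restrict_space borel X"] by (simp add: space_restrict_space)
next
  case (Cons j w)
  then show ?case using sets_piece by simp
qed

lemma cell_cover: "x \<in> X \<Longrightarrow> \<exists>w\<in>addresses k. x \<in> cell w"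
proof (induction k)
  case (Suc k)
  then obtain w where w: "w \<in> addresses k" "x \<in> cell w" by blast
  obtain j where "j < ncentres k" "x \<in> piece k j" using piece_cover[OF Suc.prems] by blast
  then show ?case using w length_addresses[OF w(1)] by (intro bexI[of _ "j # w"]) auto
qed simp

lemma cell_unique: "v \<in> addresses k \<Longrightarrow> w \<in> addresses k \<Longrightarrow> x \<in> cell v \<Longrightarrow> x \<in> cell w \<Longrightarrow> v = w"
proof (induction k arbitrary: v w)
  case (Suc k)
  obtain i v' where v: "v = i # v'" "v' \<in> addresses k" using Suc.prems(1) by (rule addresses_SucE)
  obtain j w' where w: "w = j # w'" "w' \<in> addresses k" using Suc.prems(2) by (rule addresses_SucE)
  have "v' = w'" using Suc v w by auto
  moreover have "i = j"
    using Suc.prems(3,4) v w piece_unique length_addresses[OF v(2)] length_addresses[OF w(2)] by auto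
  ultimately show ?case using v w by simp
qed simp

lemma measurable_partition_cell:
  assumes "sets M = sets (restrict_space borel X)"
  shows "measurable_partition M (addresses k) cell"
  unfolding measurable_partition_def disjoint_family_on_def
  using assms sets_cell cell_unique cell_cover sets_eq_imp_space_eq[OF assms]
  by (auto simp: finite_addresses space_restrict_space)

lemma cell_eq_Union_children:
  assumes "w \<in> addresses k"
  shows "cell w = (\<Union>j<ncentres k. cell (j # w))"
  using piece_cover cell_subset length_addresses[OF assms] by fastforce

lemma disjoint_family_children: "disjoint_family_on (\<lambda>j. cell (j # w)) A"
  unfolding disjoint_family_on_def using piece_unique by auto

lemma dist_lt_in_cell:
  assumes "v \<in> addresses (Suc k)" and "x \<in> cell v" and "y \<in> cell v"
  shows "dist x y < 2 * radius k"
proof -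
  obtain j w where "v = j # w" "w \<in> addresses k" using assms(1) by (rule addresses_SucE)
  then have "x \<in> piece k j" "y \<in> piece k j"
    using assms(2,3) length_addresses by auto
  then have "x \<in> ball (centre k j) (radius k)" "y \<in> ball (centre k j) (radius k)"
    using piece_subset_ball by blast+
  then show ?thesis
    using dist_triangle[of x y "centre k j"] by (simp add: dist_commute)
qed

definition cell_point :: "nat list \<Rightarrow> 'a" where
  "cell_point w = (SOME x. x \<in> cell w)"

lemma cell_point_in_cell: "cell w \<noteq> {} \<Longrightarrow> cell_point w \<in> cell w"
  unfolding cell_point_def by (rule someI_ex) auto

lemma dist_cell_point_le:
  assumes "v \<in> addresses (Suc k)" and "x \<in> closure (cell v)"
  shows "dist x (cell_point v) \<le> 2 * radius k"
proof -
  have "cell v \<noteq> {}" using assms(2) by auto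
  then have "cell v \<subseteq> cball (cell_point v) (2 * radius k)"
    using dist_lt_in_cell[OF assms(1) _ cell_point_in_cell] by (force simp: dist_commute)
  then have "closure (cell v) \<subseteq> cball (cell_point v) (2 * radius k)"
    by (rule closure_minimal) simp
  then show ?thesis using assms(2) by (auto simp: dist_commute)
qed

lemma simkernel_cell_points_close:
  assumes "v \<in> addresses (Suc k)" "w \<in> addresses (Suc k)"
    and "s \<in> closure (cell v)" "t \<in> closure (cell w)"
  shows "\<bar>simkernel s t - simkernel (cell_point v) (cell_point w)\<bar> \<le> 4 * radius k"
  using simkernel_diff_le[of s t "cell_point v" "cell_point w"]
    dist_cell_point_le[OF assms(1,3)] dist_cell_point_le[OF assms(2,4)] by linarith

definition cell_mass :: "'a measure \<Rightarrow> nat list \<Rightarrow> real" where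
  "cell_mass M w = measure M (cell w)"

lemma cell_mass_nonneg: "0 \<le> cell_mass M w"
  unfolding cell_mass_def by simp

lemma cell_mass_le_1: "M \<in> PX \<Longrightarrow> cell_mass M w \<le> 1"
  unfolding cell_mass_def by (rule prob_space.prob_le_1[OF PX_prob_space])

lemma cell_mass_Nil: "M \<in> PX \<Longrightarrow> cell_mass M [] = 1"
  unfolding cell_mass_def using prob_space.prob_space[OF PX_prob_space] space_PX by simp

lemma cell_mass_children:
  assumes M: "M \<in> PX" and w: "w \<in> addresses k"
  shows "cell_mass M w = (\<Sum>j<ncentres k. cell_mass M (j # w))"
proof -
  interpret prob_space M using PX_prob_space[OF M] .
  have "measure M (\<Union>j<ncentres k. cell (j # w)) = (\<Sum>j<ncentres k. measure M (cell (j # w)))"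
    using sets_cell sets_PX[OF M] disjoint_family_children
    by (intro measure_finite_Union) (auto simp del: cell.simps)
  then show ?thesis
    unfolding cell_mass_def by (simp only: cell_eq_Union_children[OF w, symmetric])
qed

definition discrete_pairing :: "(nat list \<Rightarrow> real) \<Rightarrow> (nat list \<Rightarrow> real) \<Rightarrow> nat \<Rightarrow> real" where
  "discrete_pairing p q k =
     (\<Sum>w\<in>addresses k. q w * (\<Sum>v\<in>addresses k. p v * simkernel (cell_point v) (cell_point w)))"

lemma sim_pairing_discrete_approx:
  assumes M: "M \<in> PX" and N: "N \<in> PX"
  shows "\<bar>sim_pairing M N - discrete_pairing (cell_mass M) (cell_mass N) (Suc k)\<bar> \<le> 4 * radius k"
  unfolding sim_pairing_def discrete_pairing_def cell_mass_def
proof (rule iterated_integral_partition_approx[OF PX_prob_space[OF M] PX_prob_space[OF N]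
      measurable_partition_cell[OF sets_PX[OF M]] measurable_partition_cell[OF sets_PX[OF N]]])
  show "integrable M (\<lambda>s. simkernel s t)" for t
    by (rule integrable_simkernel_PX[OF M])
  show "integrable N (\<lambda>t. \<integral>s. simkernel s t \<partial>M)"
    using integrable_continuous_on_PX[OF N continuous_on_potential[OF M]] unfolding potential_def .
  show "\<bar>simkernel s t - simkernel (cell_point v) (cell_point w)\<bar> \<le> 4 * radius k"
    if "v \<in> addresses (Suc k)" "w \<in> addresses (Suc k)" "s \<in> cell v" "t \<in> cell w" for v w s t
    using simkernel_cell_points_close[OF that(1,2)] that(3,4) closure_subset by blast
qed

end

section \<open>Realizing consistent cell masses\<close>

definition unit_interval :: "real measure" where
  "unit_interval = restrict_space lborel {0..<1}"

lemma space_unit_interval: "space unit_interval = {0..<1}"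
  unfolding unit_interval_def by (simp add: space_restrict_space)

lemma prob_space_unit_interval: "prob_space unit_interval"
  unfolding unit_interval_def by (rule prob_space_restrict_space) auto

text \<open>At level \<open>k\<close>, \<open>[0, 1)\<close> is cut into consecutive intervals of lengths \<open>p w\<close>,
  \<open>w \<in> addresses k\<close>, the children of \<open>w\<close> subdividing the interval of \<open>w\<close> in order. A point \<open>t\<close>
  thus determines a nested sequence of nonempty cells with diameters tending to \<open>0\<close>, and
  Lebesgue measure is pushed forward along the map sending \<open>t\<close> to their limit point.\<close>

locale consistent_masses = compact_domain X for X :: "'a::metric_space set" +
  fixes p :: "nat list \<Rightarrow> real"
  assumes nonneg: "\<And>w. 0 \<le> p w" and Nil: "p [] = 1"
    and children: "\<And>k w. w \<in> addresses k \<Longrightarrow> p w = (\<Sum>j<ncentres k. p (j # w))"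
    and cell_nonempty: "\<And>w. 0 < p w \<Longrightarrow> cell w \<noteq> {}"
begin

fun left_end :: "nat list \<Rightarrow> real" where
  "left_end [] = 0"
| "left_end (j # w) = left_end w + (\<Sum>i<j. p (i # w))"

definition child :: "real \<Rightarrow> nat list \<Rightarrow> nat" where
  "child t w = (LEAST j. t < left_end (j # w) + p (j # w))"

primrec address :: "real \<Rightarrow> nat \<Rightarrow> nat list" where
  "address t 0 = []"
| "address t (Suc k) = child t (address t k) # address t k"

lemma address_spec:
  assumes "0 \<le> t" "t < 1"
  shows "address t k \<in> addresses k \<and> left_end (address t k) \<le> t \<and> t < left_end (address t k) + p (address t k)"
proof (induction k)
  case 0
  then show ?case using assms Nil by simp
next
  case (Suc k)
  define w where "w = address t k"
  define j where "j = child t w"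
  have w: "w \<in> addresses k" "left_end w \<le> t" "t < left_end w + p w"
    using Suc unfolding w_def by auto
  have last: "left_end ((ncentres k - 1) # w) + p ((ncentres k - 1) # w) = left_end w + p w"
  proof -
    have "ncentres k = Suc (ncentres k - 1)" using ncentres_pos[of k] by simp
    then have "(\<Sum>j<ncentres k. p (j # w)) = (\<Sum>i<ncentres k - 1. p (i # w)) + p ((ncentres k - 1) # w)"
      by (metis sum.lessThan_Suc)
    then show ?thesis using children[OF w(1)] by simp
  qed
  then have j: "t < left_end (j # w) + p (j # w)"
    using w(3) unfolding j_def child_def by (metis (mono_tags, lifting) LeastI)
  have "j \<le> ncentres k - 1"
    using w(3) last unfolding j_def child_def by (simp add: Least_le)
  then have "j < ncentres k"
    using ncentres_pos[of k] by linarith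
  then have "j # w \<in> addresses (Suc k)"
    using w(1) by (simp only: Cons_addresses_iff)
  moreover have "left_end (j # w) \<le> t"
  proof (cases j)
    case (Suc i)
    then have "\<not> t < left_end (i # w) + p (i # w)"
      using not_less_Least[of i "\<lambda>j. t < left_end (j # w) + p (j # w)"] unfolding j_def child_def by simp
    then show ?thesis using Suc by simp
  qed (use w in simp)
  ultimately show ?case using j unfolding w_def j_def by simp
qed

lemma cell_address_nonempty: "0 \<le> t \<Longrightarrow> t < 1 \<Longrightarrow> cell (address t k) \<noteq> {}"
  using address_spec[of t k] cell_nonempty by fastforce

lemma cell_address_antimono: "k \<le> m \<Longrightarrow> cell (address t m) \<subseteq> cell (address t k)"
proof (induction m)
  case (Suc m)
  then show ?case by (cases "k = Suc m") auto
qed simp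

definition limit_point :: "real \<Rightarrow> 'a" where
  "limit_point t = lim (\<lambda>m. cell_point (address t m))"

lemma cell_point_address_in_cell:
  "0 \<le> t \<Longrightarrow> t < 1 \<Longrightarrow> k \<le> m \<Longrightarrow> cell_point (address t m) \<in> cell (address t k)"
  using cell_point_in_cell[OF cell_address_nonempty] cell_address_antimono by blast

lemma limit_point:
  assumes t: "0 \<le> t" "t < 1"
  shows "(\<lambda>m. cell_point (address t m)) \<longlonglongrightarrow> limit_point t" and "limit_point t \<in> X"
proof -
  have "Cauchy (\<lambda>m. cell_point (address t m))"
  proof (rule metric_CauchyI)
    fix e :: real
    assume "0 < e"
    then obtain k where k: "2 * radius k < e"
      using order_tendstoD(2)[OF tendsto_mult_right_zero[OF radius_tendsto_0, of 2], of e]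
      by (auto simp: eventually_sequentially)
    have "dist (cell_point (address t m)) (cell_point (address t n)) < e" if "Suc k \<le> m" "Suc k \<le> n" for m n
      using dist_lt_in_cell[OF _ cell_point_address_in_cell[OF t that(1)] cell_point_address_in_cell[OF t that(2)]]
        address_spec[OF t] k by fastforce
    then show "\<exists>M. \<forall>m\<ge>M. \<forall>n\<ge>M. dist (cell_point (address t m)) (cell_point (address t n)) < e"
      by blast
  qed
  moreover have "cell_point (address t m) \<in> X" for m
    using cell_point_address_in_cell[OF t order.refl] cell_subset by blast
  ultimately obtain l where "l \<in> X" "(\<lambda>m. cell_point (address t m)) \<longlonglongrightarrow> l"
    using completeE[OF compact_imp_complete[OF compact]] by metis
  then show "(\<lambda>m. cell_point (address t m)) \<longlonglongrightarrow> limit_point t" and "limit_point t \<in> X"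
    unfolding limit_point_def using limI by auto
qed

lemma limit_point_in_closure_cell:
  assumes t: "0 \<le> t" "t < 1"
  shows "limit_point t \<in> closure (cell (address t k))"
proof (rule Lim_in_closed_set[OF closed_closure _ _ limit_point(1)[OF t]])
  show "\<forall>\<^sub>F m in sequentially. cell_point (address t m) \<in> closure (cell (address t k))"
    using cell_point_address_in_cell[OF t] closure_subset unfolding eventually_sequentially by blast
qed simp

lemma measurable_address: "(\<lambda>t. address t k) \<in> measurable unit_interval (count_space UNIV)"
proof (induction k)
  case (Suc k)
  have "(\<lambda>t. child t w) \<in> measurable unit_interval (count_space UNIV)" for w
    unfolding child_def unit_interval_def by (rule measurable_restrict_space1) measurable
  then have "(\<lambda>t. child t w # w) \<in> measurable unit_interval (count_space UNIV)" for w
    by (rule measurable_compose) simp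
  then show ?case
    using measurable_compose_countable[where f="\<lambda>w t. child t w # w", OF _ Suc] by simp
qed simp

lemma measurable_limit_point: "limit_point \<in> measurable unit_interval (restrict_space borel X)"
proof (rule measurable_restrict_space2)
  have "(\<lambda>t. cell_point (address t k)) \<in> borel_measurable unit_interval" for k
    by (rule measurable_compose_countable[OF _ measurable_address]) simp
  then show "limit_point \<in> borel_measurable unit_interval"
    by (rule borel_measurable_LIMSEQ_metric[where f="\<lambda>k t. cell_point (address t k)"])
      (simp add: space_unit_interval limit_point)
qed (auto simp: space_unit_interval limit_point)

definition realized_measure :: "'a measure" where
  "realized_measure = distr unit_interval (restrict_space borel X) limit_point"

lemma realized_measure_PX: "realized_measure \<in> PX"
  unfolding borel_prob_measures_def realized_measure_def
  using prob_space.prob_space_distr[OF prob_space_unit_interval measurable_limit_point] by simp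

definition address_set :: "nat \<Rightarrow> nat list \<Rightarrow> real set" where
  "address_set k v = {t \<in> {0..<1}. address t k = v}"

lemma address_setD: "t \<in> address_set k v \<Longrightarrow> 0 \<le> t \<and> t < 1 \<and> address t k = v"
  unfolding address_set_def by simp

lemma measurable_partition_address_set: "measurable_partition unit_interval (addresses k) (address_set k)"
proof -
  have "(\<lambda>t. address t k) -` {v} \<inter> space unit_interval \<in> sets unit_interval" for v
    using measurable_address[of k] unfolding measurable_count_space_eq2_countable by blast
  moreover have "(\<lambda>t. address t k) -` {v} \<inter> space unit_interval = address_set k v" for v
    unfolding address_set_def space_unit_interval by auto
  ultimately show ?thesis
    unfolding measurable_partition_def disjoint_family_on_def address_set_def space_unit_interval
    using address_spec by (auto simp: finite_addresses)
qed

lemma sum_masses: "(\<Sum>v\<in>addresses k. p v) = 1"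
proof (induction k)
  case (Suc k)
  have "(\<Sum>v\<in>addresses (Suc k). p v) = (\<Sum>w\<in>addresses k. p w)"
    unfolding sum_addresses_Suc using children by simp
  then show ?case using Suc by simp
qed (simp add: Nil)

lemma measure_address_set:
  assumes v: "v \<in> addresses k"
  shows "measure unit_interval (address_set k v) = p v"
proof -
  interpret prob_space unit_interval by (rule prob_space_unit_interval)
  have le: "measure unit_interval (address_set k u) \<le> p u" if "u \<in> addresses k" for u
  proof -
    have "address_set k u \<subseteq> {left_end u..<left_end u + p u}"
      using address_spec unfolding address_set_def by auto
    then have "emeasure lborel (address_set k u) \<le> ennreal (p u)"
      using emeasure_mono[of _ "{left_end u..<left_end u + p u}" lborel] nonneg[of u] by simp
    moreover have "emeasure unit_interval (address_set k u) = emeasure lborel (address_set k u)"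
      unfolding unit_interval_def by (rule emeasure_restrict_space) (auto simp: address_set_def)
    ultimately have "ennreal (measure unit_interval (address_set k u)) \<le> ennreal (p u)"
      by (simp add: emeasure_eq_measure)
    then show ?thesis
      using nonneg[of u] by simp
  qed
  have partition: "measurable_partition unit_interval (addresses k) (address_set k)"
    by (rule measurable_partition_address_set)
  then have "(\<Sum>u\<in>addresses k. measure unit_interval (address_set k u))
      = measure unit_interval (\<Union>u\<in>addresses k. address_set k u)"
    unfolding measurable_partition_def by (intro measure_finite_Union[symmetric]) auto
  also have "(\<Union>u\<in>addresses k. address_set k u) = space unit_interval"
    using partition sets.sets_into_space unfolding measurable_partition_def by blast
  finally have "(\<Sum>u\<in>addresses k. p u - measure unit_interval (address_set k u)) = 0"
    using sum_masses by (simp add: sum_subtractf prob_space)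
  then show ?thesis
    using le v sum_nonneg_eq_0_iff[OF finite_addresses, where f="\<lambda>u. p u - measure unit_interval (address_set k u)"]
    by force
qed

lemma potential_realized_measure:
  "potential realized_measure y = (\<integral>s. simkernel (limit_point s) y \<partial>unit_interval)"
  unfolding potential_def realized_measure_def by (rule integral_distr[OF measurable_limit_point measurable_simkernel])

lemma energy_realized_measure:
  "energy realized_measure =
     (\<integral>t. (\<integral>s. simkernel (limit_point s) (limit_point t) \<partial>unit_interval) \<partial>unit_interval)"
proof -
  have "energy realized_measure = (\<integral>t. potential realized_measure (limit_point t) \<partial>unit_interval)"
    unfolding sim_pairing_potential realized_measure_def
    by (rule integral_distr[OF measurable_limit_point borel_measurable_continuous_on_restrict])
      (rule continuous_on_potential[OF realized_measure_PX[unfolded realized_measure_def]])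
  then show ?thesis
    unfolding potential_realized_measure .
qed

lemma energy_realized_measure_approx:
  "\<bar>energy realized_measure - discrete_pairing p p (Suc k)\<bar> \<le> 4 * radius k"
proof -
  interpret U: prob_space unit_interval by (rule prob_space_unit_interval)
  have "\<bar>(\<integral>t. (\<integral>s. simkernel (limit_point s) (limit_point t) \<partial>unit_interval) \<partial>unit_interval)
      - (\<Sum>w\<in>addresses (Suc k). measure unit_interval (address_set (Suc k) w) *
          (\<Sum>v\<in>addresses (Suc k). measure unit_interval (address_set (Suc k) v) *
            simkernel (cell_point v) (cell_point w)))\<bar> \<le> 4 * radius k"
  proof (rule iterated_integral_partition_approx[OF prob_space_unit_interval prob_space_unit_interval
        measurable_partition_address_set measurable_partition_address_set])
    have "(\<lambda>s. simkernel (limit_point s) y) \<in> borel_measurable unit_interval" for y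
      using measurable_compose[OF measurable_limit_point measurable_simkernel] .
    then show "integrable unit_interval (\<lambda>s. simkernel (limit_point s) y)" for y
      by (intro U.integrable_const_bound[where B=1] AE_I2) (auto simp: less_imp_le simkernel_pos simkernel_le_1)
    have "(\<lambda>t. potential realized_measure (limit_point t)) \<in> borel_measurable unit_interval"
      using measurable_compose[OF measurable_limit_point borel_measurable_continuous_on_restrict,
          OF continuous_on_potential[OF realized_measure_PX]] .
    then show "integrable unit_interval (\<lambda>t. \<integral>s. simkernel (limit_point s) (limit_point t) \<partial>unit_interval)"
      unfolding potential_realized_measure[symmetric]
      by (intro U.integrable_const_bound[where B=1] AE_I2)
        (auto simp: potential_nonneg potential_le_1[OF realized_measure_PX])
    show "\<bar>simkernel (limit_point s) (limit_point t) - simkernel (cell_point v) (cell_point w)\<bar> \<le> 4 * radius k"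
      if "v \<in> addresses (Suc k)" "w \<in> addresses (Suc k)"
        "s \<in> address_set (Suc k) v" "t \<in> address_set (Suc k) w" for v w s t
      using simkernel_cell_points_close[OF that(1,2)] limit_point_in_closure_cell
        address_setD[OF that(3)] address_setD[OF that(4)] by metis
  qed
  then show ?thesis
    unfolding energy_realized_measure discrete_pairing_def by (simp add: measure_address_set cong: sum.cong)
qed

end

section \<open>Existence of an energy minimizer\<close>

lemma bounded_family_convergent_subseq:
  fixes a :: "nat \<Rightarrow> 'i::countable \<Rightarrow> real"
  assumes "\<And>n i. \<bar>a n i\<bar> \<le> B"
  obtains r l where "strict_mono r" "\<And>i. (\<lambda>n. a (r n) i) \<longlonglongrightarrow> l i"
proof -
  have "compactin (product_topology (\<lambda>_. euclideanreal) UNIV) (PiE (UNIV :: 'i set) (\<lambda>_. {-B..B}))"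
    by (simp add: compactin_PiE)
  then have "seq_compact (PiE (UNIV :: 'i set) (\<lambda>_. {-B..B}))"
    by (simp add: euclidean_product_topology compact_imp_seq_compact)
  moreover have "a n \<in> PiE UNIV (\<lambda>_. {-B..B})" for n
    using assms by (auto simp: abs_le_iff minus_le_iff)
  ultimately obtain l r where "strict_mono r" "(a \<circ> r) \<longlonglongrightarrow> l"
    unfolding seq_compact_def by metis
  then show ?thesis
    using that continuous_on_tendsto_compose[OF continuous_on_product_coordinates] by fastforce
qed

context compact_domain
begin

definition min_energy :: real where
  "min_energy = Inf (energy ` PX)"

lemma min_energy_le: "M \<in> PX \<Longrightarrow> min_energy \<le> energy M"
  unfolding min_energy_def
  by (rule cInf_lower) (auto intro!: bdd_belowI[where m="exp (- diameter X)"] exp_diameter_le_sim_pairing)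

lemma min_energy_pos: "0 < min_energy"
proof -
  have "exp (- diameter X) \<le> min_energy"
    unfolding min_energy_def using PX_nonempty by (intro cInf_greatest) (auto intro: exp_diameter_le_sim_pairing)
  then show ?thesis by (rule less_le_trans[rotated]) simp
qed

lemma minimizing_sequence:
  obtains Ms where "\<And>n. Ms n \<in> PX" and "(\<lambda>n. energy (Ms n)) \<longlonglongrightarrow> min_energy"
proof -
  have "\<exists>M\<in>PX. energy M < min_energy + 1 / Suc n" for n
    using cInf_lessD[of "energy ` PX" "min_energy + 1 / Suc n"] PX_nonempty
    unfolding min_energy_def by auto
  then obtain Ms where Ms: "\<And>n. Ms n \<in> PX" "\<And>n. energy (Ms n) < min_energy + 1 / Suc n"
    by metis
  have "(\<lambda>n. energy (Ms n)) \<longlonglongrightarrow> min_energy"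
  proof (rule real_tendsto_sandwich[where f="\<lambda>n. min_energy" and h="\<lambda>n. min_energy + 1 / Suc n"])
    show "(\<lambda>n. min_energy + 1 / real (Suc n)) \<longlonglongrightarrow> min_energy"
      using tendsto_add[OF tendsto_const LIMSEQ_inverse_real_of_nat] by (simp add: inverse_eq_divide)
  qed (use Ms min_energy_le in \<open>auto intro!: always_eventually less_imp_le\<close>)
  then show ?thesis by (rule that[OF Ms(1)])
qed

lemma consistent_masses_limit:
  assumes Ms: "\<And>n. Ms n \<in> PX" and lim: "\<And>w. (\<lambda>n. cell_mass (Ms n) w) \<longlonglongrightarrow> p w"
  shows "consistent_masses X p"
proof
  show "0 \<le> p w" for w
    by (rule LIMSEQ_le_const[OF lim]) (simp add: cell_mass_nonneg)
  show "p [] = 1"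
    using lim[of "[]"] cell_mass_Nil[OF Ms] LIMSEQ_unique by (simp add: LIMSEQ_const_iff)
  show "p w = (\<Sum>j<ncentres k. p (j # w))" if "w \<in> addresses k" for k w
  proof -
    have "(\<lambda>n. \<Sum>j<ncentres k. cell_mass (Ms n) (j # w)) \<longlonglongrightarrow> (\<Sum>j<ncentres k. p (j # w))"
      by (intro tendsto_sum lim)
    then show ?thesis
      using lim[of w] LIMSEQ_unique cell_mass_children[OF Ms that] by simp
  qed
  show "cell w \<noteq> {}" if "0 < p w" for w
  proof (rule ccontr)
    assume "\<not> cell w \<noteq> {}"
    then have "p w = 0"
      using lim[of w] LIMSEQ_unique by (simp add: cell_mass_def LIMSEQ_const_iff)
    then show False using that by simp
  qed
qed

theorem energy_minimizer_exists: "\<exists>M\<in>PX. energy M = min_energy"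
proof -
  obtain Ms where Ms: "\<And>n. Ms n \<in> PX" "(\<lambda>n. energy (Ms n)) \<longlonglongrightarrow> min_energy"
    using minimizing_sequence by metis
  obtain r p where r: "strict_mono r" and p: "\<And>w. (\<lambda>n. cell_mass (Ms (r n)) w) \<longlonglongrightarrow> p w"
    using bounded_family_convergent_subseq[of "\<lambda>n. cell_mass (Ms n)" 1]
      cell_mass_nonneg cell_mass_le_1[OF Ms(1)] by (metis abs_of_nonneg)
  interpret consistent_masses X p
    using consistent_masses_limit[OF Ms(1) p] .
  have "\<bar>energy realized_measure - min_energy\<bar> \<le> 8 * radius k" for k
  proof -
    have "(\<lambda>n. energy (Ms (r n)) - discrete_pairing (cell_mass (Ms (r n))) (cell_mass (Ms (r n))) (Suc k))
        \<longlonglongrightarrow> min_energy - discrete_pairing p p (Suc k)"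
      using LIMSEQ_subseq_LIMSEQ[OF Ms(2) r] unfolding discrete_pairing_def o_def
      by (intro tendsto_intros p)
    then have "\<bar>min_energy - discrete_pairing p p (Suc k)\<bar> \<le> 4 * radius k"
      using sim_pairing_discrete_approx[OF Ms(1) Ms(1)]
      by (intro tendsto_le[OF trivial_limit_sequentially tendsto_const tendsto_rabs]) auto
    then show ?thesis
      using energy_realized_measure_approx[of k] by linarith
  qed
  then have "energy realized_measure = min_energy"
    using le_0_if_le_mult_radius[of "\<bar>energy realized_measure - min_energy\<bar>" 8] by simp
  then show ?thesis
    using realized_measure_PX by blast
qed

lemma diversity_maximizing_iff: "diversity_maximizing X M \<longleftrightarrow> M \<in> PX \<and> energy M = min_energy"
proof -
  have energy_pos: "0 < energy M" if "M \<in> PX" for M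
    using min_energy_le[OF that] min_energy_pos by linarith
  have "max_diversity X = 1 / min_energy"
    unfolding max_diversity_def
  proof (rule cSup_eq_maximum)
    show "1 / min_energy \<in> (\<lambda>M. 1 / energy M) ` PX"
      using energy_minimizer_exists by force
    show "x \<le> 1 / min_energy" if "x \<in> (\<lambda>M. 1 / energy M) ` PX" for x
      using that min_energy_le min_energy_pos by (auto intro!: divide_left_mono mult_pos_pos energy_pos)
  qed
  then show ?thesis
    unfolding diversity_maximizing_def using energy_pos min_energy_pos by auto
qed

end

section \<open>Uniqueness under negative type\<close>

context compact_domain
begin

lemma discrete_pairing_double_sum:
  "discrete_pairing p q k =
     (\<Sum>v\<in>addresses k. \<Sum>w\<in>addresses k. p v * q w * simkernel (cell_point v) (cell_point w))"
proof -
  have "discrete_pairing p q k =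
      (\<Sum>w\<in>addresses k. \<Sum>v\<in>addresses k. p v * q w * simkernel (cell_point v) (cell_point w))"
    unfolding discrete_pairing_def by (simp add: sum_distrib_left mult_ac)
  also have "\<dots> = (\<Sum>v\<in>addresses k. \<Sum>w\<in>addresses k. p v * q w * simkernel (cell_point v) (cell_point w))"
    by (rule sum.swap)
  finally show ?thesis .
qed

lemma discrete_pairing_linear_left:
  "discrete_pairing (\<lambda>w. \<alpha> * a w + \<beta> * b w) q k = \<alpha> * discrete_pairing a q k + \<beta> * discrete_pairing b q k"
proof -
  have "(\<alpha> * a v + \<beta> * b v) * q w * K = \<alpha> * (a v * q w * K) + \<beta> * (b v * q w * K)" for v w and K :: real
    by (simp add: algebra_simps)
  then show ?thesis
    unfolding discrete_pairing_double_sum by (simp only: sum.distrib sum_distrib_left)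
qed

lemma discrete_pairing_linear_right:
  "discrete_pairing q (\<lambda>w. \<alpha> * a w + \<beta> * b w) k = \<alpha> * discrete_pairing q a k + \<beta> * discrete_pairing q b k"
proof -
  have "q v * (\<alpha> * a w + \<beta> * b w) * K = \<alpha> * (q v * a w * K) + \<beta> * (q v * b w * K)" for v w and K :: real
    by (simp add: algebra_simps)
  then show ?thesis
    unfolding discrete_pairing_double_sum by (simp only: sum.distrib sum_distrib_left)
qed

lemma discrete_pairing_midpoint:
  "discrete_pairing (\<lambda>w. (a w + b w) / 2) (\<lambda>w. (a w + b w) / 2) k =
     (discrete_pairing a a k + discrete_pairing a b k + discrete_pairing b a k + discrete_pairing b b k) / 4"
proof -
  have midpoint: "(\<lambda>w. (a w + b w) / 2) = (\<lambda>w. 1 / 2 * a w + 1 / 2 * b w)" by auto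
  show ?thesis
    unfolding midpoint discrete_pairing_linear_left discrete_pairing_linear_right by (simp add: field_simps)
qed

lemma discrete_pairing_diff:
  "discrete_pairing (\<lambda>w. a w - b w) (\<lambda>w. a w - b w) k =
     discrete_pairing a a k - discrete_pairing a b k - discrete_pairing b a k + discrete_pairing b b k"
proof -
  have diff: "(\<lambda>w. a w - b w) = (\<lambda>w. 1 * a w + (- 1) * b w)" by auto
  show ?thesis
    unfolding diff discrete_pairing_linear_left discrete_pairing_linear_right by simp
qed

lemma consistent_masses_midpoint:
  assumes M: "M \<in> PX" and N: "N \<in> PX"
  shows "consistent_masses X (\<lambda>w. (cell_mass M w + cell_mass N w) / 2)"
proof
  show "0 \<le> (cell_mass M w + cell_mass N w) / 2" for w
    by (simp add: cell_mass_nonneg)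
  show "(cell_mass M [] + cell_mass N []) / 2 = 1"
    using cell_mass_Nil M N by simp
  show "(cell_mass M w + cell_mass N w) / 2 = (\<Sum>j<ncentres k. (cell_mass M (j # w) + cell_mass N (j # w)) / 2)"
    if "w \<in> addresses k" for k w
    using cell_mass_children[OF M that] cell_mass_children[OF N that]
    by (simp add: sum.distrib sum_divide_distrib[symmetric])
  show "cell w \<noteq> {}" if "0 < (cell_mass M w + cell_mass N w) / 2" for w
    using that unfolding cell_mass_def by auto
qed

text \<open>The realization of the midpoint masses discretizes \<open>(M + N) / 2\<close>, whose energy cannot
  be smaller than \<open>min_energy\<close>.\<close>

lemma minimizers_cross_pairing_ge:
  assumes M: "M \<in> PX" and N: "N \<in> PX"
    and min_M: "energy M = min_energy" and min_N: "energy N = min_energy"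
  shows "2 * min_energy \<le> sim_pairing M N + sim_pairing N M"
proof -
  interpret mid: consistent_masses X "\<lambda>w. (cell_mass M w + cell_mass N w) / 2"
    by (rule consistent_masses_midpoint[OF M N])
  have "2 * min_energy - (sim_pairing M N + sim_pairing N M) \<le> 32 * radius k" for k
    using min_energy_le[OF mid.realized_measure_PX] mid.energy_realized_measure_approx[of k]
      sim_pairing_discrete_approx[OF M M, of k] sim_pairing_discrete_approx[OF M N, of k]
      sim_pairing_discrete_approx[OF N M, of k] sim_pairing_discrete_approx[OF N N, of k]
    unfolding discrete_pairing_midpoint min_M min_N by (simp add: abs_le_iff add_divide_distrib)
  then show ?thesis
    using le_0_if_le_mult_radius[of _ 32] by fastforce
qed

lemma minimizers_discrete_energy_diff_le:
  assumes M: "M \<in> PX" and N: "N \<in> PX"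
    and min_M: "energy M = min_energy" and min_N: "energy N = min_energy"
  shows "discrete_pairing (\<lambda>w. cell_mass M w - cell_mass N w) (\<lambda>w. cell_mass M w - cell_mass N w) (Suc k)
    \<le> 16 * radius k"
  using minimizers_cross_pairing_ge[OF assms]
    sim_pairing_discrete_approx[OF M M, of k] sim_pairing_discrete_approx[OF M N, of k]
    sim_pairing_discrete_approx[OF N M, of k] sim_pairing_discrete_approx[OF N N, of k]
  unfolding discrete_pairing_diff min_M min_N by (simp add: abs_le_iff)

lemma cell_sums_tendsto_integral:
  fixes g :: "'a \<Rightarrow> real"
  assumes M: "M \<in> PX" and g: "continuous_on X g"
  shows "(\<lambda>k. \<Sum>v\<in>addresses (Suc k). cell_mass M v * g (cell_point v)) \<longlonglongrightarrow> (\<integral>x. g x \<partial>M)"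
proof (rule LIMSEQ_I)
  fix e :: real
  assume e: "0 < e"
  obtain d where d: "0 < d" "\<And>x x'. x \<in> X \<Longrightarrow> x' \<in> X \<Longrightarrow> dist x' x < d \<Longrightarrow> dist (g x') (g x) < e / 2"
    using compact_uniformly_continuous[OF g compact] e unfolding uniformly_continuous_on_def
    by (metis half_gt_zero)
  obtain k0 where k0: "\<And>k. k0 \<le> k \<Longrightarrow> 2 * radius k < d"
    using order_tendstoD(2)[OF tendsto_mult_right_zero[OF radius_tendsto_0, of 2] d(1)]
    by (auto simp: eventually_sequentially)
  have "\<bar>(\<integral>x. g x \<partial>M) - (\<Sum>v\<in>addresses (Suc k). cell_mass M v * g (cell_point v))\<bar> \<le> e / 2"
    if k: "k0 \<le> k" for k
    unfolding cell_mass_def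
  proof (rule prob_space.integral_partition_approx[OF PX_prob_space[OF M]
        measurable_partition_cell[OF sets_PX[OF M]] integrable_continuous_on_PX[OF M g]])
    fix v x assume v: "v \<in> addresses (Suc k)" and x: "x \<in> cell v"
    then have "cell_point v \<in> cell v"
      by (intro cell_point_in_cell) auto
    moreover have "dist (cell_point v) x < d"
      using dist_lt_in_cell[OF v \<open>cell_point v \<in> cell v\<close> x] k0[OF k] by linarith
    ultimately have "dist (g (cell_point v)) (g x) < e / 2"
      using d(2)[of x "cell_point v"] x cell_subset[of v] by blast
    then show "\<bar>g x - g (cell_point v)\<bar> \<le> e / 2"
      by (simp add: dist_real_def abs_minus_commute)
  qed
  then show "\<exists>k0. \<forall>k\<ge>k0. norm ((\<Sum>v\<in>addresses (Suc k). cell_mass M v * g (cell_point v)) - (\<integral>x. g x \<partial>M)) < e"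
    using e by (fastforce simp del: addresses.simps simp: abs_minus_commute)
qed

end

lemma tendsto_indicator_closed:
  fixes F :: "'a::metric_space set"
  assumes F: "closed F" "F \<noteq> {}"
  shows "(\<lambda>n. max 0 (1 - real n * infdist x F)) \<longlonglongrightarrow> indicator F x"
proof (cases "x \<in> F")
  case True
  then show ?thesis by simp
next
  case False
  then have pos: "0 < infdist x F"
    using in_closed_iff_infdist_zero[OF F] infdist_nonneg[of x F] by (simp add: order_less_le)
  obtain n0 :: nat where n0: "1 / infdist x F < n0"
    using reals_Archimedean2 by blast
  have "max 0 (1 - real n * infdist x F) = 0" if "n0 \<le> n" for n
  proof -
    have "1 < real n0 * infdist x F" using n0 pos by (simp add: field_simps)
    also have "\<dots> \<le> real n * infdist x F" using that pos by (intro mult_right_mono) auto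
    finally show ?thesis by simp
  qed
  then show ?thesis
    using False by (intro tendsto_eventually) (auto simp: eventually_sequentially)
qed

context compact_domain
begin

lemma measure_closed_eq_if_continuous_integrals_eq:
  assumes M: "M \<in> PX" and N: "N \<in> PX"
    and agree: "\<And>u::'a \<Rightarrow> real. continuous_on X u \<Longrightarrow> (\<integral>x. u x \<partial>M) = (\<integral>x. u x \<partial>N)"
    and F: "closed F"
  shows "measure M (F \<inter> X) = measure N (F \<inter> X)"
proof (cases "F \<inter> X = {}")
  case False
  define g where "g n x = max 0 (1 - real n * infdist x (F \<inter> X))" for n x
  have g: "continuous_on X (g n)" for n
    unfolding g_def by (intro continuous_intros)
  have "(\<lambda>n. \<integral>x. g n x \<partial>Q) \<longlonglongrightarrow> measure Q (F \<inter> X)" if Q: "Q \<in> PX" for Q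
  proof -
    interpret prob_space Q using PX_prob_space[OF Q] .
    have FX: "F \<inter> X \<in> sets Q"
      using sets_PX[OF Q] F by (auto simp: sets_restrict_space)
    have "(\<lambda>n. \<integral>x. g n x \<partial>Q) \<longlonglongrightarrow> (\<integral>x. indicator (F \<inter> X) x \<partial>Q)"
    proof (rule integral_dominated_convergence[where w="\<lambda>x. 1"])
      show "AE x in Q. (\<lambda>n. g n x) \<longlonglongrightarrow> indicator (F \<inter> X) x"
        unfolding g_def using F False compact_imp_closed[OF compact]
        by (intro AE_I2 tendsto_indicator_closed) auto
      show "AE x in Q. norm (g n x) \<le> 1" for n
        unfolding g_def using infdist_nonneg by (intro AE_I2) (auto intro!: mult_nonneg_nonneg)
    qed (use FX borel_measurable_continuous_on_PX[OF Q g] in auto)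
    then show ?thesis
      using FX sets.sets_into_space by (simp add: Int_absorb2)
  qed
  note lim = this
  have "(\<lambda>n. \<integral>x. g n x \<partial>N) \<longlonglongrightarrow> measure M (F \<inter> X)"
    using lim[OF M] agree[OF g] by simp
  then show ?thesis
    using lim[OF N] LIMSEQ_unique by blast
qed simp

lemma measure_eq_if_continuous_integrals_eq:
  assumes M: "M \<in> PX" and N: "N \<in> PX"
    and agree: "\<And>u::'a \<Rightarrow> real. continuous_on X u \<Longrightarrow> (\<integral>x. u x \<partial>M) = (\<integral>x. u x \<partial>N)"
  shows "M = N"
proof -
  have measurable_id: "(\<lambda>x. x) \<in> measurable Q borel" if "Q \<in> PX" for Q
    unfolding measurable_cong_sets[OF sets_PX[OF that] refl]
    by (rule measurable_restrict_space1[OF measurable_ident_sets[OF refl]])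
  have distr: "emeasure (distr Q borel (\<lambda>x. x)) B = emeasure Q (B \<inter> X)" if "Q \<in> PX" "B \<in> sets borel" for Q B
    using emeasure_distr[OF measurable_id that(2)] space_PX that by simp
  interpret M: prob_space M using PX_prob_space[OF M] .
  interpret N: prob_space N using PX_prob_space[OF N] .
  have "distr M borel (\<lambda>x. x) = distr N borel (\<lambda>x. x)"
  proof (rule measure_eqI_generator_eq[where E="Collect closed" and \<Omega>=UNIV and A="\<lambda>_. UNIV"])
    show "emeasure (distr M borel (\<lambda>x. x)) F = emeasure (distr N borel (\<lambda>x. x)) F" if "F \<in> Collect closed" for F
      using that distr[OF M] distr[OF N] measure_closed_eq_if_continuous_integrals_eq[OF M N agree]
      by (simp add: M.emeasure_eq_measure N.emeasure_eq_measure)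
    show "emeasure (distr M borel (\<lambda>x. x)) UNIV \<noteq> \<infinity>"
      using distr[OF M, of UNIV] by simp
  qed (auto simp: Int_stable_def borel_eq_closed)
  then have "emeasure M A = emeasure N A" if "A \<in> sets M" for A
    using that distr[OF M] distr[OF N] sets_PX[OF M] by (auto simp: sets_restrict_space Int_commute)
  then show ?thesis
    using sets_PX[OF M] sets_PX[OF N] by (intro measure_eqI) auto
qed

end

locale negative_type_embedding = compact_domain X for X :: "'a::metric_space set" +
  fixes f :: "'a \<Rightarrow> 'h::real_inner"
  assumes dist_embedding: "\<And>x y. x \<in> X \<Longrightarrow> y \<in> X \<Longrightarrow> dist (f x) (f y) = sqrt (dist x y)"
begin

lemma simkernel_eq_gaussian: "x \<in> X \<Longrightarrow> y \<in> X \<Longrightarrow> simkernel x y = exp (- (norm (f x - f y) ^ 2))"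
  unfolding simkernel_def by (simp add: dist_embedding dist_norm[symmetric])

lemma continuous_on_embedding: "continuous_on X f"
  unfolding continuous_on_iff
proof (intro ballI allI impI)
  fix x and e :: real
  assume x: "x \<in> X" and e: "0 < e"
  have "dist (f x') (f x) < e" if "x' \<in> X" "dist x' x < e ^ 2" for x'
    using that x e dist_embedding[of x' x] real_sqrt_less_iff[of "dist x' x" "e ^ 2"] by simp
  then show "\<exists>d>0. \<forall>x'\<in>X. dist x' x < d \<longrightarrow> dist (f x') (f x) < e"
    using e by (intro exI[of _ "e ^ 2"]) auto
qed

lemma embedding_eqD: "x \<in> X \<Longrightarrow> y \<in> X \<Longrightarrow> f x = f y \<Longrightarrow> x = y"
  using dist_embedding[of x y] by simp

lemma discrete_pairing_gaussian:
  assumes "\<And>v. c v \<noteq> 0 \<Longrightarrow> cell v \<noteq> {}"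
  shows "discrete_pairing c c k =
    (\<Sum>v\<in>addresses k. \<Sum>w\<in>addresses k. c v * c w * exp (- (norm (f (cell_point v) - f (cell_point w)) ^ 2)))"
proof -
  have X: "cell_point v \<in> X" if "c v \<noteq> 0" for v
    using cell_point_in_cell[OF assms[OF that]] cell_subset by blast
  have eq: "c v * c w * simkernel (cell_point v) (cell_point w)
      = c v * c w * exp (- (norm (f (cell_point v) - f (cell_point w)) ^ 2))" for v w
    using X[of v] X[of w] by (cases "c v = 0 \<or> c w = 0") (auto simp: simkernel_eq_gaussian)
  show ?thesis
    unfolding discrete_pairing_double_sum by (simp only: eq)
qed

text \<open>The discretized energy of \<open>M - N\<close> vanishes in the limit, while adjoining \<open>h\<close> keeps the
  Gaussian kernel positive semidefinite; in the limit, \<open>0 \<le> 2 s T + s\<^sup>2\<close> for every \<open>s\<close>, where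
  \<open>T\<close> is the difference of the two integrals.\<close>

lemma gaussian_integrals_eq:
  assumes M: "M \<in> PX" and N: "N \<in> PX"
    and min_M: "energy M = min_energy" and min_N: "energy N = min_energy"
  shows "(\<integral>x. exp (- (norm (f x - h) ^ 2)) \<partial>M) = (\<integral>x. exp (- (norm (f x - h) ^ 2)) \<partial>N)"
proof -
  define g where "g x = exp (- (norm (f x - h) ^ 2))" for x
  have g: "continuous_on X g"
    unfolding g_def by (intro continuous_intros continuous_on_embedding)
  define c where "c v = cell_mass M v - cell_mass N v" for v
  define T where "T = (\<integral>x. g x \<partial>M) - (\<integral>x. g x \<partial>N)"
  define T' where "T' k = (\<Sum>v\<in>addresses (Suc k). c v * g (cell_point v))" for k
  have "T' \<longlonglongrightarrow> T"
    using tendsto_diff[OF cell_sums_tendsto_integral[OF M g] cell_sums_tendsto_integral[OF N g]]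
    unfolding T'_def T_def c_def by (simp add: left_diff_distrib sum_subtractf)
  have "0 \<le> 2 * s * T + s ^ 2" for s
  proof (rule LIMSEQ_le_const)
    show "(\<lambda>k. 2 * s * T' k + s ^ 2 + 16 * radius k) \<longlonglongrightarrow> 2 * s * T + s ^ 2"
      using \<open>T' \<longlonglongrightarrow> T\<close> radius_tendsto_0 by (auto intro!: tendsto_eq_intros)
    have nonempty: "c v \<noteq> 0 \<Longrightarrow> cell v \<noteq> {}" for v
      unfolding c_def cell_mass_def by auto
    have psd: "0 \<le> discrete_pairing c c (Suc k) + 2 * s * T' k + s ^ 2" for k
      using gaussian_kernel_psd_extra_point[OF finite_addresses[of "Suc k"], where c=c
          and a="\<lambda>v. f (cell_point v)" and s=s and h=h] discrete_pairing_gaussian[of c, OF nonempty]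
      unfolding T'_def g_def by (simp del: addresses.simps)
    have "0 \<le> 2 * s * T' k + s ^ 2 + 16 * radius k" for k
      using psd[of k] minimizers_discrete_energy_diff_le[OF M N min_M min_N, of k] unfolding c_def by linarith
    then show "\<exists>N. \<forall>k\<ge>N. 0 \<le> 2 * s * T' k + s ^ 2 + 16 * radius k"
      by blast
  qed
  from this[of "- T"] have "T ^ 2 \<le> 0"
    by (simp add: power2_eq_square)
  then have "T = 0" by simp
  then show ?thesis
    unfolding T_def g_def by simp
qed

definition weight :: "'a \<Rightarrow> real" where
  "weight x = exp (- (norm (f x) ^ 2))"

lemma continuous_on_weight: "continuous_on X weight"
  unfolding weight_def by (intro continuous_intros continuous_on_embedding)

lemma weighted_exp_integrals_eq:
  assumes M: "M \<in> PX" and N: "N \<in> PX"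
    and min_M: "energy M = min_energy" and min_N: "energy N = min_energy"
  shows "(\<integral>x. weight x * exp (f x \<bullet> h) \<partial>M) = (\<integral>x. weight x * exp (f x \<bullet> h) \<partial>N)"
proof -
  have "exp (- (norm (f x - (1 / 2) *\<^sub>R h) ^ 2)) = weight x * exp (f x \<bullet> h) * exp (- (norm h ^ 2) / 4)" for x
  proof -
    have "norm (f x - (1 / 2) *\<^sub>R h) ^ 2 = norm (f x) ^ 2 - f x \<bullet> h + norm h ^ 2 / 4"
      by (simp add: power2_norm_eq_inner inner_diff_left inner_diff_right inner_commute)
    then show ?thesis
      unfolding weight_def by (simp add: exp_add[symmetric] exp_diff)
  qed
  then show ?thesis
    using gaussian_integrals_eq[OF assms, of "(1 / 2) *\<^sub>R h"] by simp
qed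

inductive exp_poly :: "('a \<Rightarrow> real) \<Rightarrow> bool" where
  exp_inner: "exp_poly (\<lambda>x. c * exp (f x \<bullet> h))"
| add: "exp_poly g1 \<Longrightarrow> exp_poly g2 \<Longrightarrow> exp_poly (\<lambda>x. g1 x + g2 x)"

lemma exp_poly_const: "exp_poly (\<lambda>x. c)"
  using exp_poly.exp_inner[of c 0] by simp

lemma exp_poly_mult_exp_inner: "exp_poly g \<Longrightarrow> exp_poly (\<lambda>x. c * exp (f x \<bullet> h) * g x)"
proof (induction rule: exp_poly.induct)
  case (exp_inner d h')
  have "(\<lambda>x. c * exp (f x \<bullet> h) * (d * exp (f x \<bullet> h'))) = (\<lambda>x. (c * d) * exp (f x \<bullet> (h + h')))"
    by (simp add: inner_add_right exp_add mult_ac)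
  then show ?case using exp_poly.exp_inner by metis
next
  case (add g1 g2)
  then show ?case using exp_poly.add[OF add.IH] by (simp add: distrib_left)
qed

lemma exp_poly_mult: "exp_poly g1 \<Longrightarrow> exp_poly g2 \<Longrightarrow> exp_poly (\<lambda>x. g1 x * g2 x)"
proof (induction arbitrary: g2 rule: exp_poly.induct)
  case (exp_inner c h)
  then show ?case by (rule exp_poly_mult_exp_inner)
next
  case (add g1 g1')
  then show ?case using exp_poly.add[OF add.IH(1)[OF add.prems] add.IH(2)[OF add.prems]] by (simp add: distrib_right)
qed

lemma continuous_on_exp_poly: "exp_poly g \<Longrightarrow> continuous_on X g"
  by (induction rule: exp_poly.induct) (auto intro!: continuous_intros continuous_on_embedding)

lemma exp_poly_separating:
  assumes x: "x \<in> X" and y: "y \<in> X" and "x \<noteq> y"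
  shows "\<exists>g. exp_poly g \<and> g x \<noteq> g y"
proof -
  define h where "h = f x - f y"
  have "h \<noteq> 0" using embedding_eqD[OF x y] \<open>x \<noteq> y\<close> unfolding h_def by auto
  then have "0 < h \<bullet> h" by simp
  then have "f y \<bullet> h < f x \<bullet> h"
    unfolding h_def by (simp add: inner_diff_left inner_diff_right inner_commute)
  then show ?thesis
    using exp_poly.exp_inner[of 1 h] by (intro exI[of _ "\<lambda>x. 1 * exp (f x \<bullet> h)"]) auto
qed

lemma weighted_exp_poly_integrals_eq:
  assumes M: "M \<in> PX" and N: "N \<in> PX"
    and min_M: "energy M = min_energy" and min_N: "energy N = min_energy"
  shows "exp_poly g \<Longrightarrow> (\<integral>x. weight x * g x \<partial>M) = (\<integral>x. weight x * g x \<partial>N)"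
proof (induction rule: exp_poly.induct)
  case (exp_inner c h)
  show ?case
    using weighted_exp_integrals_eq[OF assms, of h] by (simp add: mult.left_commute[of _ c])
next
  case (add g1 g2)
  have "integrable Q (\<lambda>x. weight x * g x)" if "Q \<in> PX" "exp_poly g" for Q g
    using integrable_continuous_on_PX[OF that(1) continuous_on_mult[OF continuous_on_weight
        continuous_on_exp_poly[OF that(2)]]] .
  then show ?case
    using add M N by (simp add: distrib_left)
qed

text \<open>By Stone--Weierstrass, \<open>u / weight\<close> is a uniform limit of exponential polynomials.\<close>

lemma weighted_exp_poly_approx:
  assumes u: "continuous_on X (u :: 'a \<Rightarrow> real)" and e: "0 < e"
  obtains g where "exp_poly g" and "\<And>Q. Q \<in> PX \<Longrightarrow> \<bar>(\<integral>x. u x \<partial>Q) - (\<integral>x. weight x * g x \<partial>Q)\<bar> \<le> e"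
proof -
  have weight: "0 < weight x" "weight x \<le> 1" for x
    unfolding weight_def by auto
  have "continuous_on X (\<lambda>x. u x / weight x)"
    using u continuous_on_weight weight by (intro continuous_on_divide) (auto simp: less_imp_neq[symmetric])
  then obtain g where g: "exp_poly g" "\<And>x. x \<in> X \<Longrightarrow> \<bar>u x / weight x - g x\<bar> < e"
    using Stone_Weierstrass_HOL[of X exp_poly "\<lambda>x. u x / weight x" e, OF compact exp_poly_const
        continuous_on_exp_poly _ _ _ _ e] exp_poly.add exp_poly_mult exp_poly_separating by blast
  have close: "\<bar>u x - weight x * g x\<bar> \<le> e" if "x \<in> X" for x
  proof -
    have "\<bar>u x - weight x * g x\<bar> = weight x * \<bar>u x / weight x - g x\<bar>"
      using weight[of x] by (simp add: abs_mult field_simps)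
    also have "\<dots> \<le> 1 * e"
      using g(2)[OF that] weight[of x] by (intro mult_mono) auto
    finally show ?thesis by simp
  qed
  have "\<bar>(\<integral>x. u x \<partial>Q) - (\<integral>x. weight x * g x \<partial>Q)\<bar> \<le> e" if Q: "Q \<in> PX" for Q
  proof -
    interpret prob_space Q using PX_prob_space[OF Q] .
    have "integrable Q u" "integrable Q (\<lambda>x. weight x * g x)"
      using integrable_continuous_on_PX[OF Q u] integrable_continuous_on_PX[OF Q
          continuous_on_mult[OF continuous_on_weight continuous_on_exp_poly[OF g(1)]]] by auto
    moreover have "(\<integral>x. u x - weight x * g x \<partial>Q) \<le> e" "(\<integral>x. weight x * g x - u x \<partial>Q) \<le> e"
      using calculation close space_PX[OF Q] by (intro integral_le_const AE_I2; force simp: abs_le_iff)+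
    ultimately show ?thesis by (simp add: abs_le_iff)
  qed
  then show ?thesis using that g(1) by blast
qed

lemma continuous_integrals_eq:
  assumes M: "M \<in> PX" and N: "N \<in> PX"
    and min_M: "energy M = min_energy" and min_N: "energy N = min_energy"
    and u: "continuous_on X (u :: 'a \<Rightarrow> real)"
  shows "(\<integral>x. u x \<partial>M) = (\<integral>x. u x \<partial>N)"
proof -
  have "\<bar>(\<integral>x. u x \<partial>M) - (\<integral>x. u x \<partial>N)\<bar> \<le> 0"
  proof (rule field_le_epsilon)
    fix e :: real
    assume "0 < e"
    then obtain g where exp_poly: "exp_poly g"
      and g: "\<And>Q. Q \<in> PX \<Longrightarrow> \<bar>(\<integral>x. u x \<partial>Q) - (\<integral>x. weight x * g x \<partial>Q)\<bar> \<le> e / 2"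
      using weighted_exp_poly_approx[OF u, of "e / 2"] by auto
    show "\<bar>(\<integral>x. u x \<partial>M) - (\<integral>x. u x \<partial>N)\<bar> \<le> 0 + e"
      using g[OF M, unfolded abs_le_iff] g[OF N, unfolded abs_le_iff]
        weighted_exp_poly_integrals_eq[OF M N min_M min_N exp_poly] by linarith
  qed
  then show ?thesis by simp
qed

theorem energy_minimizer_unique:
  assumes "M \<in> PX" "N \<in> PX" and "energy M = min_energy" "energy N = min_energy"
  shows "M = N"
  using assms by (intro measure_eq_if_continuous_integrals_eq continuous_integrals_eq)

end

theorem mainTheorem4:
  fixes X :: "'a::metric_space set" and f :: "'a \<Rightarrow> 'h::{real_inner,complete_space}"
  assumes "compact X" and "X \<noteq> {}"
    and "neg_type_into X f"
  shows "\<exists>!\<mu>. diversity_maximizing X \<mu>"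
proof -
  interpret negative_type_embedding X f
    using assms unfolding neg_type_into_def by unfold_locales auto
  show ?thesis
    unfolding diversity_maximizing_iff using energy_minimizer_exists energy_minimizer_unique by blast
qed

end
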